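(* Let $G$ be a graph (the similarity graph) on the vertex set $\{\mathbf{y}_1,\dots,\mathbf{y}_n\}$ of a sequence of observations, identified with the index set $\{1,\dots,n\}$, with edge set also denoted $G$. Work under the permutation null distribution, which places probability $1/n!$ on each of the $n!$ orderings of the observations (the graph $G$ is held fixed; only the time-indices of the observations are permuted); $\mathbf{E}$, $\mathbf{Var}$, $\mathbf{Cov}$ denote moments under this distribution. (Single change-point.) For $1\le t<n$ let $R_1(t)$ be the number of edges of $G$ joining two observations with indices $\le t$, and $R_2(t)$ the number of edges joining two observations with indices $>t$. Let $\Sigma(t)$ be the covariance matrix of $(R_1(t),R_2(t))^T$ under the permutation null (assumed invertible), and $$S(t)=\begin{pmatrix}R_1(t)-\mathbf{E}R_1(t)\\ R_2(t)-\mathbf{E}R_2(t)\end{pmatrix}^T\Sigma(t)^{-1}\begin{pmatrix}R_1(t)-\mathbf{E}R_1(t)\\ R_2(t)-\mathbf{E}R_2(t)\end{pmatrix}.$$ With $p(t)=\frac{t-1}{n-2}$, $q(t)=1-p(t)$, let $R_w(t)=q(t)R_1(t)+p(t)R_2(t)$ and $R_{\mathrm{diff}}(t)=R_1(t)-R_2(t)$, and let $Z_w(t)=\frac{R_w(t)-\mathbf{E}R_w(t)}{\sqrt{\mathbf{Var}R_w(t)}}$, $Z_{\mathrm{diff}}(t)=\frac{R_{\mathrm{diff}}(t)-\mathbf{E}R_{\mathrm{diff}}(t)}{\sqrt{\mathbf{Var}R_{\mathrm{diff}}(t)}}$ (variances assumed positive). Then $$S(t)=Z_w^2(t)+Z_{\mathrm{diff}}^2(t).$$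 (Changed interval.) For $1\le t_1<t_2\le n$ with $m=t_2-t_1$, let $R_1(t_1,t_2)$ be the number of edges of $G$ joining two observations with indices outside $(t_1,t_2]$, and $R_2(t_1,t_2)$ the number of edges joining two observations with indices in $(t_1,t_2]$. Define $S(t_1,t_2)$ as the same quadratic form in $(R_1(t_1,t_2)-\mathbf{E}R_1(t_1,t_2),\,R_2(t_1,t_2)-\mathbf{E}R_2(t_1,t_2))$ with the inverse of their permutation-null covariance matrix; let $R_w(t_1,t_2)=\frac{m-1}{n-2}R_1(t_1,t_2)+\frac{n-m-1}{n-2}R_2(t_1,t_2)$, $R_{\mathrm{diff}}(t_1,t_2)=R_1(t_1,t_2)-R_2(t_1,t_2)$, and $Z_w(t_1,t_2)$, $Z_{\mathrm{diff}}(t_1,t_2)$ their standardizations by permutation-null mean and standard deviation. Then $$S(t_1,t_2)=Z_w^2(t_1,t_2)+Z_{\mathrm{diff}}^2(t_1,t_2).$$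
   Context: The weighted statistic weights each within-group edge count by (size of the other group $-1$)$/(n-2)$; in the single change-point case the group before $t$ has size $t$ and the group after has size $n-t$. *)

theory Defs
  imports "HOL-Analysis.Analysis" "HOL-Combinatorics.Permutations"
begin

text \<open>Under the permutation null, a permutation sigma of
  {1..n} reassigns observation i to time index sigma i; each of the n! permutations
  has probability 1/n!. The observed data correspond to sigma = id.\<close>

definition simple_graph_on :: "nat \<Rightarrow> nat set set \<Rightarrow> bool" where
  "simple_graph_on n G \<longleftrightarrow> (\<forall>e\<in>G. card e = 2 \<and> e \<subseteq> {1..n})"

definition perm_set :: "nat \<Rightarrow> (nat \<Rightarrow> nat) set" where
  "perm_set n = {\<sigma>. \<sigma> permutes {1..n}}"

definition PE :: "nat \<Rightarrow> ((nat \<Rightarrow> nat) \<Rightarrow> real) \<Rightarrow> real" where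
  "PE n X = (\<Sum>\<sigma>\<in>perm_set n. X \<sigma>) / fact n"

definition PCov :: "nat \<Rightarrow> ((nat \<Rightarrow> nat) \<Rightarrow> real) \<Rightarrow> ((nat \<Rightarrow> nat) \<Rightarrow> real) \<Rightarrow> real" where
  "PCov n X Y = PE n (\<lambda>\<sigma>. (X \<sigma> - PE n X) * (Y \<sigma> - PE n Y))"

definition PVar :: "nat \<Rightarrow> ((nat \<Rightarrow> nat) \<Rightarrow> real) \<Rightarrow> real" where
  "PVar n X = PCov n X X"

definition edge_count :: "nat set set \<Rightarrow> nat set \<Rightarrow> (nat \<Rightarrow> nat) \<Rightarrow> real" where
  "edge_count G A \<sigma> = real (card {e\<in>G. \<forall>i\<in>e. \<sigma> i \<in> A})"

definition cov_mat :: "nat \<Rightarrow> ((nat \<Rightarrow> nat) \<Rightarrow> real) \<Rightarrow> ((nat \<Rightarrow> nat) \<Rightarrow> real) \<Rightarrow> real^2^2" where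
  "cov_mat n X Y = (\<chi> i j. PCov n (if i = 1 then X else Y) (if j = 1 then X else Y))"

definition centered_vec :: "nat \<Rightarrow> ((nat \<Rightarrow> nat) \<Rightarrow> real) \<Rightarrow> ((nat \<Rightarrow> nat) \<Rightarrow> real) \<Rightarrow> real^2" where
  "centered_vec n X Y = (\<chi> i. if i = 1 then X id - PE n X else Y id - PE n Y)"

definition quad_stat :: "nat \<Rightarrow> ((nat \<Rightarrow> nat) \<Rightarrow> real) \<Rightarrow> ((nat \<Rightarrow> nat) \<Rightarrow> real) \<Rightarrow> real" where
  "quad_stat n X Y = centered_vec n X Y \<bullet> (matrix_inv (cov_mat n X Y) *v centered_vec n X Y)"

definition std_stat :: "nat \<Rightarrow> ((nat \<Rightarrow> nat) \<Rightarrow> real) \<Rightarrow> real" where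
  "std_stat n X = (X id - PE n X) / sqrt (PVar n X)"

end

theory Submission
  imports Defs
begin

text \<open>The pair
  \<open>(R\<^sub>w, R\<^sub>d\<^sub>i\<^sub>f\<^sub>f)\<close> is an invertible linear image of \<open>(R\<^sub>1, R\<^sub>2)\<close>, so the quadratic form
  \<open>S\<close> splits into \<open>Z\<^sub>w\<^sup>2 + Z\<^sub>d\<^sub>i\<^sub>f\<^sub>f\<^sup>2\<close> as soon as \<open>R\<^sub>w\<close> and \<open>R\<^sub>d\<^sub>i\<^sub>f\<^sub>f\<close> are uncorrelated under
  the permutation null. Expanding both counts over edges, with \<open>\<xi>\<^sub>i\<close> the indicator that
  observation \<open>i\<close> falls into the group \<open>A\<close> of size \<open>a\<close>, the covariance reduces to
  \<open>Cov(\<xi>\<^sub>u \<xi>\<^sub>v - p (\<xi>\<^sub>u + \<xi>\<^sub>v), \<xi>\<^sub>k)\<close> for an edge \<open>{u, v}\<close> and a vertex \<open>k\<close>. For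
  \<open>k \<in> {u, v}\<close> the first two moments \<open>E \<xi>\<^sub>u = a/n\<close>, \<open>E \<xi>\<^sub>u \<xi>\<^sub>v = a(a-1)/(n(n-1))\<close> make it
  vanish for \<open>p = (a - 1)/(n - 2)\<close>; for the other \<open>k\<close> it does not depend on \<open>k\<close> by
  exchangeability, and the sum over all \<open>k\<close> is the covariance with the constant \<open>a\<close>.\<close>

lemma card_perm_set: "card (perm_set n) = fact n"
  unfolding perm_set_def by (rule card_permutations) auto

lemma PE_const: "PE n (\<lambda>\<sigma>. c) = c"
  unfolding PE_def by (simp add: card_perm_set)

lemma PE_add: "PE n (\<lambda>\<sigma>. X \<sigma> + Y \<sigma>) = PE n X + PE n Y"
  unfolding PE_def by (simp add: sum.distrib add_divide_distrib)

lemma PE_diff: "PE n (\<lambda>\<sigma>. X \<sigma> - Y \<sigma>) = PE n X - PE n Y"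
  unfolding PE_def by (simp add: sum_subtractf diff_divide_distrib)

lemma PE_cmult: "PE n (\<lambda>\<sigma>. c * X \<sigma>) = c * PE n X"
  unfolding PE_def by (simp add: sum_distrib_left)

lemma PE_sum: "PE n (\<lambda>\<sigma>. \<Sum>k\<in>K. f k \<sigma>) = (\<Sum>k\<in>K. PE n (f k))"
  unfolding PE_def sum_divide_distrib[symmetric] by (subst sum.swap) (rule refl)

lemma PE_cong: "(\<And>\<sigma>. \<sigma> \<in> perm_set n \<Longrightarrow> X \<sigma> = Y \<sigma>) \<Longrightarrow> PE n X = PE n Y"
  unfolding PE_def by (simp cong: sum.cong)

lemma PCov_eq: "PCov n X Y = PE n (\<lambda>\<sigma>. X \<sigma> * Y \<sigma>) - PE n X * PE n Y"
proof -
  have "PCov n X Y = PE n (\<lambda>\<sigma>. X \<sigma> * Y \<sigma> - PE n Y * X \<sigma> - (PE n X * Y \<sigma> - PE n X * PE n Y))"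
    unfolding PCov_def by (rule PE_cong) (simp add: algebra_simps)
  then show ?thesis
    by (simp only: PE_diff PE_cmult PE_const) simp
qed

lemma PCov_commute: "PCov n X Y = PCov n Y X"
  unfolding PCov_eq by (simp add: mult.commute)

lemma PCov_cong:
  assumes "\<And>\<sigma>. \<sigma> \<in> perm_set n \<Longrightarrow> X \<sigma> = X' \<sigma>" "\<And>\<sigma>. \<sigma> \<in> perm_set n \<Longrightarrow> Y \<sigma> = Y' \<sigma>"
  shows "PCov n X Y = PCov n X' Y'"
  unfolding PCov_eq using assms by (simp cong: PE_cong)

lemma PCov_add_left: "PCov n (\<lambda>\<sigma>. X \<sigma> + Y \<sigma>) Z = PCov n X Z + PCov n Y Z"
  unfolding PCov_eq by (simp add: distrib_right PE_add algebra_simps)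

lemma PCov_add_right: "PCov n X (\<lambda>\<sigma>. Y \<sigma> + Z \<sigma>) = PCov n X Y + PCov n X Z"
  using PCov_add_left[of n Y Z X] by (simp add: PCov_commute[of n X])

lemma PCov_diff_right: "PCov n X (\<lambda>\<sigma>. Y \<sigma> - Z \<sigma>) = PCov n X Y - PCov n X Z"
  unfolding PCov_eq by (simp add: right_diff_distrib PE_diff algebra_simps)

lemma PCov_cmult_left: "PCov n (\<lambda>\<sigma>. c * X \<sigma>) Y = c * PCov n X Y"
  unfolding PCov_eq using PE_cmult[of n c "\<lambda>\<sigma>. X \<sigma> * Y \<sigma>"]
  by (simp add: PE_cmult algebra_simps)

lemma PCov_cmult_right: "PCov n X (\<lambda>\<sigma>. c * Y \<sigma>) = c * PCov n X Y"
  using PCov_cmult_left[of n c Y X] by (simp add: PCov_commute[of n X])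

lemma PCov_const_left: "PCov n (\<lambda>\<sigma>. c) X = 0"
  unfolding PCov_eq by (simp add: PE_const PE_cmult)

lemma PCov_const_right: "PCov n X (\<lambda>\<sigma>. c) = 0"
  using PCov_const_left[of n c X] by (simp add: PCov_commute[of n X])

lemma PCov_sum_left: "PCov n (\<lambda>\<sigma>. \<Sum>k\<in>K. f k \<sigma>) X = (\<Sum>k\<in>K. PCov n (f k) X)"
  unfolding PCov_eq by (simp add: sum_distrib_right PE_sum sum_subtractf)

lemma PCov_sum_right: "PCov n X (\<lambda>\<sigma>. \<Sum>k\<in>K. f k \<sigma>) = (\<Sum>k\<in>K. PCov n X (f k))"
  using PCov_sum_left[of n f K X] by (simp add: PCov_commute[of n X])

lemma PCov_linear_combination:
  "PCov n (\<lambda>\<sigma>. a1 * X \<sigma> + a2 * Y \<sigma>) (\<lambda>\<sigma>. b1 * X \<sigma> + b2 * Y \<sigma>)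
   = a1 * b1 * PVar n X + (a1 * b2 + a2 * b1) * PCov n X Y + a2 * b2 * PVar n Y"
  unfolding PVar_def
  by (simp add: PCov_add_left PCov_add_right PCov_cmult_left PCov_cmult_right algebra_simps)
     (simp add: PCov_commute[of n Y X])

lemma PE_compose_transpose:
  assumes "k \<in> {1..n}" "k' \<in> {1..n}"
  shows "PE n (\<lambda>\<sigma>. F (\<sigma> \<circ> Transposition.transpose k k')) = PE n F"
  unfolding PE_def perm_set_def
  using sum_permutations_compose_right[OF permutes_swap_id[OF assms], of F] by simp

definition lands_in :: "nat set \<Rightarrow> nat \<Rightarrow> (nat \<Rightarrow> nat) \<Rightarrow> real" where
  "lands_in A i \<sigma> = (if \<sigma> i \<in> A then 1 else 0)"

lemma lands_in_compose_transpose: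
  "lands_in A j (\<sigma> \<circ> Transposition.transpose k k') = lands_in A (Transposition.transpose k k' j) \<sigma>"
  by (simp add: lands_in_def)

lemma lands_in_square: "lands_in A i \<sigma> * lands_in A i \<sigma> = lands_in A i \<sigma>"
  by (simp add: lands_in_def)

lemma sum_lands_in:
  assumes "\<sigma> \<in> perm_set n" "A \<subseteq> {1..n}"
  shows "(\<Sum>i\<in>{1..n}. lands_in A i \<sigma>) = real (card A)"
proof -
  have "bij_betw \<sigma> {1..n} {1..n}"
    using assms(1) by (simp add: perm_set_def permutes_imp_bij)
  then have "(\<Sum>i\<in>{1..n}. lands_in A i \<sigma>) = (\<Sum>j\<in>{1..n}. if j \<in> A then 1 else 0)"
    unfolding lands_in_def by (rule sum.reindex_bij_betw)
  also have "\<dots> = real (card A)"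
    using assms(2) by (simp add: sum.If_cases Int_absorb1)
  finally show ?thesis .
qed

lemma PE_lands_in:
  assumes "i \<in> {1..n}" "A \<subseteq> {1..n}"
  shows "PE n (lands_in A i) = real (card A) / real n"
proof -
  have same: "PE n (lands_in A k) = PE n (lands_in A i)" if "k \<in> {1..n}" for k
    using PE_compose_transpose[OF that assms(1), of "lands_in A i"]
    by (simp add: lands_in_compose_transpose)
  have "real n * PE n (lands_in A i) = (\<Sum>k\<in>{1..n}. PE n (lands_in A k))"
    using same by simp
  also have "\<dots> = PE n (\<lambda>\<sigma>. \<Sum>k\<in>{1..n}. lands_in A k \<sigma>)"
    by (simp add: PE_sum)
  also have "\<dots> = real (card A)"
    using sum_lands_in assms(2) by (simp add: PE_const cong: PE_cong)
  finally show ?thesis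
    using assms(1) by (simp add: field_simps)
qed

lemma PE_lands_in_pair:
  assumes "u \<in> {1..n}" "v \<in> {1..n}" "u \<noteq> v" "A \<subseteq> {1..n}"
  shows "PE n (\<lambda>\<sigma>. lands_in A u \<sigma> * lands_in A v \<sigma>)
         = real (card A) / real n * ((real (card A) - 1) / (real n - 1))"
proof -
  let ?E = "\<lambda>k. PE n (\<lambda>\<sigma>. lands_in A u \<sigma> * lands_in A k \<sigma>)"
  have same: "?E k = ?E v" if "k \<in> {1..n} - {u}" for k
    using PE_compose_transpose[of k n v "\<lambda>\<sigma>. lands_in A u \<sigma> * lands_in A v \<sigma>"] that assms
    by (simp add: lands_in_compose_transpose)
  have "(\<Sum>k\<in>{1..n}. ?E k) = PE n (\<lambda>\<sigma>. lands_in A u \<sigma> * (\<Sum>k\<in>{1..n}. lands_in A k \<sigma>))"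
    by (simp add: PE_sum sum_distrib_left)
  also have "\<dots> = real (card A) * PE n (lands_in A u)"
    using sum_lands_in assms(4) by (simp add: PE_cmult mult.commute cong: PE_cong)
  finally have total: "(\<Sum>k\<in>{1..n}. ?E k) = real (card A) * PE n (lands_in A u)" .
  have "(\<Sum>k\<in>{1..n}. ?E k) = (\<Sum>k\<in>{1..n} - {u}. ?E k) + ?E u"
    using sum.subset_diff[of "{u}" "{1..n}" ?E] assms(1) by simp
  also have "\<dots> = (\<Sum>k\<in>{1..n} - {u}. ?E v) + PE n (lands_in A u)"
    using sum.cong[OF refl same, of "{1..n} - {u}"] by (simp add: lands_in_square)
  also have "\<dots> = (real n - 1) * ?E v + PE n (lands_in A u)"
    using assms(1) by (simp add: of_nat_diff)
  finally have "(real n - 1) * ?E v = (real (card A) - 1) * PE n (lands_in A u)"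
    using total by (simp add: algebra_simps)
  moreover have "real n - 1 \<noteq> 0"
    using assms(1-3) by auto
  ultimately have "?E v = (real (card A) - 1) * PE n (lands_in A u) / (real n - 1)"
    by (simp add: eq_divide_eq mult.commute)
  then show ?thesis
    using PE_lands_in[OF assms(1,4)] by simp
qed

lemma null_weight_identity:
  fixes x a :: real
  assumes "x \<ge> 3"
  shows "(1 - (a - 1) / (x - 2) - a / x) * ((a - 1) / (x - 1)) = (a - 1) / (x - 2) * (1 - 2 * (a / x))"
proof -
  define p r e where "p = (a - 1) / (x - 2)" and "r = (a - 1) / (x - 1)" and "e = a / x"
  have "p * (x - 2) = a - 1" "r * (x - 1) = a - 1" "e * x = a"
    using assms by (simp_all add: p_def r_def e_def)
  then have "((1 - p - e) * r - p * (1 - 2 * e)) * (x * (x - 1) * (x - 2)) = 0"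
    by algebra
  moreover have "x * (x - 1) * (x - 2) \<noteq> 0"
    using assms by simp
  ultimately show ?thesis
    by (simp add: p_def r_def e_def)
qed

text \<open>For an edge \<open>{u, v}\<close>, \<open>(1 - p) \<cdot> [u, v \<in> A] + p \<cdot> [u, v \<notin> A]\<close> equals
  \<open>weighted_pair A p u v + p\<close>.\<close>

definition weighted_pair :: "nat set \<Rightarrow> real \<Rightarrow> nat \<Rightarrow> nat \<Rightarrow> (nat \<Rightarrow> nat) \<Rightarrow> real" where
  "weighted_pair A p u v \<sigma> = lands_in A u \<sigma> * lands_in A v \<sigma> - p * (lands_in A u \<sigma> + lands_in A v \<sigma>)"

lemma weighted_pair_commute: "weighted_pair A p u v = weighted_pair A p v u"
  unfolding weighted_pair_def by (auto simp: algebra_simps)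

lemma PCov_weighted_pair_endpoint:
  assumes "u \<in> {1..n}" "v \<in> {1..n}" "u \<noteq> v" "A \<subseteq> {1..n}" "n \<ge> 3"
    and p: "p = (real (card A) - 1) / (real n - 2)"
  shows "PCov n (weighted_pair A p u v) (lands_in A u) = 0"
proof -
  define e r where "e = real (card A) / real n" and "r = (real (card A) - 1) / (real n - 1)"
  have Eu: "PE n (lands_in A u) = e" and Ev: "PE n (lands_in A v) = e"
    using PE_lands_in assms(1,2,4) by (simp_all add: e_def)
  have Euv: "PE n (\<lambda>\<sigma>. lands_in A u \<sigma> * lands_in A v \<sigma>) = e * r"
    using PE_lands_in_pair[OF assms(1-4)] by (simp add: e_def r_def)
  have "PE n (\<lambda>\<sigma>. weighted_pair A p u v \<sigma> * lands_in A u \<sigma>)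
        = PE n (\<lambda>\<sigma>. (1 - p) * (lands_in A u \<sigma> * lands_in A v \<sigma>) - p * lands_in A u \<sigma>)"
    by (rule PE_cong) (simp add: weighted_pair_def lands_in_def)
  also have "\<dots> = (1 - p) * (e * r) - p * e"
    by (simp add: PE_diff PE_cmult Euv Eu)
  finally have Eprod: "PE n (\<lambda>\<sigma>. weighted_pair A p u v \<sigma> * lands_in A u \<sigma>) = (1 - p) * (e * r) - p * e" .
  have Epair: "PE n (weighted_pair A p u v) = e * r - 2 * p * e"
    unfolding weighted_pair_def by (simp add: PE_diff PE_cmult PE_add Euv Eu Ev)
  have "PCov n (weighted_pair A p u v) (lands_in A u) = e * ((1 - p - e) * r - p * (1 - 2 * e))"
    unfolding PCov_eq Eprod Epair Eu by (simp add: algebra_simps)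
  moreover have "(1 - p - e) * r = p * (1 - 2 * e)"
    using null_weight_identity[of "real n" "real (card A)"] assms(5) by (simp add: p e_def r_def)
  ultimately show ?thesis
    by simp
qed

lemma PCov_weighted_pair_lands_in_swap:
  assumes "j \<in> {1..n} - {u, v}" "k \<in> {1..n} - {u, v}" "A \<subseteq> {1..n}"
  shows "PCov n (weighted_pair A p u v) (lands_in A j) = PCov n (weighted_pair A p u v) (lands_in A k)"
proof -
  have "PE n (\<lambda>\<sigma>. weighted_pair A p u v \<sigma> * lands_in A j \<sigma>)
        = PE n (\<lambda>\<sigma>. weighted_pair A p u v \<sigma> * lands_in A k \<sigma>)"
    using PE_compose_transpose[of j n k "\<lambda>\<sigma>. weighted_pair A p u v \<sigma> * lands_in A k \<sigma>"] assms(1,2)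
    by (simp add: weighted_pair_def lands_in_compose_transpose)
  moreover have "PE n (lands_in A j) = PE n (lands_in A k)"
    using PE_lands_in assms by simp
  ultimately show ?thesis
    unfolding PCov_eq by simp
qed

lemma PCov_weighted_pair_lands_in:
  assumes "u \<in> {1..n}" "v \<in> {1..n}" "u \<noteq> v" "A \<subseteq> {1..n}" "n \<ge> 3" "k \<in> {1..n}"
    and p: "p = (real (card A) - 1) / (real n - 2)"
  shows "PCov n (weighted_pair A p u v) (lands_in A k) = 0"
proof -
  let ?C = "\<lambda>j. PCov n (weighted_pair A p u v) (lands_in A j)"
  have Cu: "?C u = 0"
    by (rule PCov_weighted_pair_endpoint[OF assms(1-5) p])
  have Cv: "?C v = 0"
    using PCov_weighted_pair_endpoint[OF assms(2,1) _ assms(4,5) p] assms(3)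
    by (simp add: weighted_pair_commute)
  show ?thesis
  proof (cases "k \<in> {u, v}")
    case True
    then show ?thesis using Cu Cv by auto
  next
    case False
    have same: "?C j = ?C k" if "j \<in> {1..n} - {u, v}" for j
      using PCov_weighted_pair_lands_in_swap[OF that _ assms(4)] False assms(6) by simp
    have "(\<Sum>j\<in>{1..n}. ?C j) = PCov n (weighted_pair A p u v) (\<lambda>\<sigma>. \<Sum>j\<in>{1..n}. lands_in A j \<sigma>)"
      by (simp add: PCov_sum_right)
    also have "\<dots> = PCov n (weighted_pair A p u v) (\<lambda>\<sigma>. real (card A))"
      using sum_lands_in assms(4) by (intro PCov_cong) simp_all
    finally have "(\<Sum>j\<in>{1..n}. ?C j) = 0"
      by (simp add: PCov_const_right)
    moreover have "(\<Sum>j\<in>{1..n}. ?C j) = (\<Sum>j\<in>{1..n} - {u, v}. ?C j) + ?C u + ?C v"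
      using sum.subset_diff[of "{u, v}" "{1..n}" ?C] assms(1-3) by simp
    moreover have "(\<Sum>j\<in>{1..n} - {u, v}. ?C j) = real (n - 2) * ?C k"
      using sum.cong[OF refl same, of "{1..n} - {u, v}"] assms(1-3) by simp
    ultimately show ?thesis
      using Cu Cv assms(5) by simp
  qed
qed

definition edge_within :: "nat set \<Rightarrow> nat set \<Rightarrow> (nat \<Rightarrow> nat) \<Rightarrow> real" where
  "edge_within A e \<sigma> = (if \<forall>i\<in>e. \<sigma> i \<in> A then 1 else 0)"

lemma simple_graph_on_finite: "simple_graph_on n G \<Longrightarrow> finite G"
  unfolding simple_graph_on_def by (meson PowI finite_Pow_iff finite_atLeastAtMost finite_subset subsetI)

lemma simple_graph_on_edgeE:
  assumes "simple_graph_on n G" "e \<in> G"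
  obtains u v where "e = {u, v}" "u \<noteq> v" "u \<in> {1..n}" "v \<in> {1..n}"
proof -
  have "card e = 2" "e \<subseteq> {1..n}"
    using assms unfolding simple_graph_on_def by auto
  then show ?thesis
    using that by (auto simp: card_2_iff)
qed

lemma edge_count_eq_sum_edge_within:
  assumes "simple_graph_on n G"
  shows "edge_count G A \<sigma> = (\<Sum>e\<in>G. edge_within A e \<sigma>)"
  unfolding edge_count_def edge_within_def
  using simple_graph_on_finite[OF assms] by (simp add: sum.If_cases Int_def)

lemma edge_count_eq_0_if_card_le_1:
  assumes "simple_graph_on n G" "\<sigma> \<in> perm_set n" "finite A" "card A \<le> 1"
  shows "edge_count G A \<sigma> = 0"
proof -
  have "\<not> (\<forall>i\<in>e. \<sigma> i \<in> A)" if edge: "e \<in> G" for e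
  proof
    assume in_A: "\<forall>i\<in>e. \<sigma> i \<in> A"
    obtain u v where "e = {u, v}" "u \<noteq> v"
      using simple_graph_on_edgeE[OF assms(1) edge] by metis
    moreover have "inj \<sigma>"
      using assms(2) by (simp add: perm_set_def permutes_inj)
    ultimately have "card {\<sigma> u, \<sigma> v} = 2"
      by (simp add: inj_eq)
    moreover have "card {\<sigma> u, \<sigma> v} \<le> card A"
      using in_A \<open>e = {u, v}\<close> by (intro card_mono[OF assms(3)]) simp
    ultimately show False
      using assms(4) by simp
  qed
  then have "{e \<in> G. \<forall>i\<in>e. \<sigma> i \<in> A} = {}"
    by blast
  then show ?thesis
    by (simp only: edge_count_def card.empty of_nat_0)
qed

lemma edge_within_doubleton: "edge_within A {u, v} \<sigma> = lands_in A u \<sigma> * lands_in A v \<sigma>"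
  unfolding edge_within_def lands_in_def by auto

lemma edge_within_complement_doubleton:
  assumes "\<sigma> \<in> perm_set n" "u \<in> {1..n}" "v \<in> {1..n}"
  shows "edge_within ({1..n} - A) {u, v} \<sigma> = (1 - lands_in A u \<sigma>) * (1 - lands_in A v \<sigma>)"
proof -
  have "\<sigma> u \<in> {1..n}" "\<sigma> v \<in> {1..n}"
    using assms permutes_in_image[of \<sigma> "{1..n}"] unfolding perm_set_def by blast+
  then show ?thesis
    unfolding edge_within_def lands_in_def by auto
qed

lemma PCov_weighted_edge_within_diff:
  assumes G: "simple_graph_on n G" and "e \<in> G" "f \<in> G" "A \<subseteq> {1..n}" "n \<ge> 3"
    and p: "p = (real (card A) - 1) / (real n - 2)"
  shows "PCov n (\<lambda>\<sigma>. (1 - p) * edge_within A e \<sigma> + p * edge_within ({1..n} - A) e \<sigma>)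
                (\<lambda>\<sigma>. edge_within A f \<sigma> - edge_within ({1..n} - A) f \<sigma>) = 0"
proof -
  obtain u v where e: "e = {u, v}" "u \<noteq> v" "u \<in> {1..n}" "v \<in> {1..n}"
    using simple_graph_on_edgeE[OF G assms(2)] by metis
  obtain k l where f: "f = {k, l}" "k \<in> {1..n}" "l \<in> {1..n}"
    using simple_graph_on_edgeE[OF G assms(3)] by metis
  have "PCov n (\<lambda>\<sigma>. (1 - p) * edge_within A e \<sigma> + p * edge_within ({1..n} - A) e \<sigma>)
               (\<lambda>\<sigma>. edge_within A f \<sigma> - edge_within ({1..n} - A) f \<sigma>)
        = PCov n (\<lambda>\<sigma>. weighted_pair A p u v \<sigma> + p) (\<lambda>\<sigma>. lands_in A k \<sigma> + lands_in A l \<sigma> - 1)"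
  proof (rule PCov_cong)
    fix \<sigma> assume \<sigma>: "\<sigma> \<in> perm_set n"
    show "(1 - p) * edge_within A e \<sigma> + p * edge_within ({1..n} - A) e \<sigma>
          = weighted_pair A p u v \<sigma> + p"
      unfolding e(1) edge_within_complement_doubleton[OF \<sigma> e(3,4)]
      unfolding edge_within_doubleton
      by (simp add: weighted_pair_def algebra_simps)
    show "edge_within A f \<sigma> - edge_within ({1..n} - A) f \<sigma>
          = lands_in A k \<sigma> + lands_in A l \<sigma> - 1"
      unfolding f(1) edge_within_complement_doubleton[OF \<sigma> f(2,3)]
      unfolding edge_within_doubleton
      by (simp add: lands_in_def)
  qed
  also have "\<dots> = PCov n (weighted_pair A p u v) (lands_in A k) + PCov n (weighted_pair A p u v) (lands_in A l)"
    by (simp add: PCov_add_left PCov_add_right PCov_diff_right PCov_const_left PCov_const_right)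
  also have "\<dots> = 0"
    using PCov_weighted_pair_lands_in[OF e(3,4,2) assms(4,5) _ p] f(2,3) by simp
  finally show ?thesis .
qed

lemma PCov_weighted_edge_count_diff:
  assumes G: "simple_graph_on n G" and "A \<subseteq> {1..n}" "n \<ge> 3"
    and p: "p = (real (card A) - 1) / (real n - 2)"
  shows "PCov n (\<lambda>\<sigma>. (1 - p) * edge_count G A \<sigma> + p * edge_count G ({1..n} - A) \<sigma>)
                (\<lambda>\<sigma>. edge_count G A \<sigma> - edge_count G ({1..n} - A) \<sigma>) = 0"
proof -
  have "PCov n (\<lambda>\<sigma>. (1 - p) * edge_count G A \<sigma> + p * edge_count G ({1..n} - A) \<sigma>)
               (\<lambda>\<sigma>. edge_count G A \<sigma> - edge_count G ({1..n} - A) \<sigma>)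
     = PCov n (\<lambda>\<sigma>. \<Sum>e\<in>G. (1 - p) * edge_within A e \<sigma> + p * edge_within ({1..n} - A) e \<sigma>)
              (\<lambda>\<sigma>. \<Sum>f\<in>G. edge_within A f \<sigma> - edge_within ({1..n} - A) f \<sigma>)"
    by (simp add: edge_count_eq_sum_edge_within[OF G] sum.distrib sum_distrib_left sum_subtractf)
  also have "\<dots> = (\<Sum>e\<in>G. \<Sum>f\<in>G. PCov n (\<lambda>\<sigma>. (1 - p) * edge_within A e \<sigma> + p * edge_within ({1..n} - A) e \<sigma>)
                              (\<lambda>\<sigma>. edge_within A f \<sigma> - edge_within ({1..n} - A) f \<sigma>))"
    by (simp add: PCov_sum_left PCov_sum_right)
  also have "\<dots> = 0"
    using PCov_weighted_edge_within_diff[OF G _ _ assms(2,3) p] by simp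
  finally show ?thesis .
qed

lemma quadratic_form_split_2x2:
  fixes w1 w2 a b d c1 c2 y1 y2 :: real
  assumes w: "w1 + w2 = 1" and uncorrelated: "w1 * a - w1 * b + w2 * b - w2 * d = 0"
    and pos_w: "w1\<^sup>2 * a + 2 * w1 * w2 * b + w2\<^sup>2 * d > 0" and pos_diff: "a - 2 * b + d > 0"
    and c1: "c1 = a * y1 + b * y2" and c2: "c2 = b * y1 + d * y2"
  shows "c1 * y1 + c2 * y2
         = (w1 * c1 + w2 * c2)\<^sup>2 / (w1\<^sup>2 * a + 2 * w1 * w2 * b + w2\<^sup>2 * d)
           + (c1 - c2)\<^sup>2 / (a - 2 * b + d)"
proof -
  define s where "s = a - 2 * b + d"
  define K where "K = b + w1 * w2 * s"
  have w1: "w1 = 1 - w2"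
    using w by simp
  have a: "a = b + w2 * s" and d: "d = b + w1 * s"
    using uncorrelated unfolding s_def w1 by (simp_all add: algebra_simps)
  have var_w: "w1\<^sup>2 * a + 2 * w1 * w2 * b + w2\<^sup>2 * d = K"
    unfolding K_def a d w1 by (simp add: algebra_simps power2_eq_square)
  have "w1 * c1 + w2 * c2 = K * (y1 + y2)"
    unfolding c1 c2 K_def a d w1 by (simp add: algebra_simps)
  moreover have "c1 - c2 = s * (w2 * y1 - w1 * y2)"
    unfolding c1 c2 a d w1 by (simp add: algebra_simps)
  moreover have "K \<noteq> 0" "s \<noteq> 0"
    using pos_w pos_diff var_w s_def by auto
  ultimately have "(w1 * c1 + w2 * c2)\<^sup>2 / K + (c1 - c2)\<^sup>2 / s = K * (y1 + y2)\<^sup>2 + s * (w2 * y1 - w1 * y2)\<^sup>2"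
    by (simp add: power2_eq_square)
  also have "\<dots> = c1 * y1 + c2 * y2"
    unfolding c1 c2 K_def a d w1 by (simp add: algebra_simps power2_eq_square)
  finally show ?thesis
    unfolding var_w s_def by simp
qed

lemma invertible_matrix_inv_right:
  fixes M :: "'a::semiring_1^'n^'n"
  assumes "invertible M"
  shows "M ** matrix_inv M = mat 1"
proof -
  have "\<exists>M'. M ** M' = mat 1 \<and> M' ** M = mat 1"
    using assms unfolding invertible_def .
  then show ?thesis
    unfolding matrix_inv_def by (rule someI2_ex) blast
qed

lemma quad_stat_eq_std_stat_squares:
  fixes R1 R2 :: "(nat \<Rightarrow> nat) \<Rightarrow> real"
  assumes w: "w1 + w2 = 1"
    and uncorrelated: "PCov n (\<lambda>\<sigma>. w1 * R1 \<sigma> + w2 * R2 \<sigma>) (\<lambda>\<sigma>. R1 \<sigma> - R2 \<sigma>) = 0"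
    and inv: "invertible (cov_mat n R1 R2)"
    and pos_w: "PVar n (\<lambda>\<sigma>. w1 * R1 \<sigma> + w2 * R2 \<sigma>) > 0"
    and pos_diff: "PVar n (\<lambda>\<sigma>. R1 \<sigma> - R2 \<sigma>) > 0"
  shows "quad_stat n R1 R2
         = (std_stat n (\<lambda>\<sigma>. w1 * R1 \<sigma> + w2 * R2 \<sigma>))\<^sup>2 + (std_stat n (\<lambda>\<sigma>. R1 \<sigma> - R2 \<sigma>))\<^sup>2"
proof -
  define M c y where "M = cov_mat n R1 R2" and "c = centered_vec n R1 R2" and "y = matrix_inv M *v c"
  define a b d where "a = PVar n R1" and "b = PCov n R1 R2" and "d = PVar n R2"
  define c1 c2 where "c1 = R1 id - PE n R1" and "c2 = R2 id - PE n R2"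
  have M: "M $ 1 $ 1 = a" "M $ 1 $ 2 = b" "M $ 2 $ 1 = b" "M $ 2 $ 2 = d"
    unfolding M_def cov_mat_def a_def b_def d_def PVar_def by (simp_all add: PCov_commute)
  have c: "c $ 1 = c1" "c $ 2 = c2"
    unfolding c_def centered_vec_def c1_def c2_def by simp_all
  have "M *v y = c"
    unfolding y_def using invertible_matrix_inv_right[OF inv[folded M_def]]
    by (metis matrix_vector_mul_assoc matrix_vector_mul_lid)
  then have "c $ i = M $ i $ 1 * y $ 1 + M $ i $ 2 * y $ 2" for i
    by (auto simp: matrix_vector_mult_def sum_2)
  from this[of 1] this[of 2] have c1_eq: "c1 = a * y $ 1 + b * y $ 2" and c2_eq: "c2 = b * y $ 1 + d * y $ 2"
    by (simp_all add: M c)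
  have quad: "quad_stat n R1 R2 = c1 * y $ 1 + c2 * y $ 2"
    unfolding quad_stat_def c_def[symmetric] M_def[symmetric] y_def[symmetric]
    by (simp add: inner_vec_def sum_2 c)
  have diff: "(\<lambda>\<sigma>. R1 \<sigma> - R2 \<sigma>) = (\<lambda>\<sigma>. 1 * R1 \<sigma> + (- 1) * R2 \<sigma>)"
    by simp
  have var_w: "PVar n (\<lambda>\<sigma>. w1 * R1 \<sigma> + w2 * R2 \<sigma>) = w1\<^sup>2 * a + 2 * w1 * w2 * b + w2\<^sup>2 * d"
    unfolding PVar_def[of n "\<lambda>\<sigma>. w1 * R1 \<sigma> + w2 * R2 \<sigma>"] PCov_linear_combination a_def b_def d_def
    by (simp add: power2_eq_square)
  have var_diff: "PVar n (\<lambda>\<sigma>. R1 \<sigma> - R2 \<sigma>) = a - 2 * b + d"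
    unfolding PVar_def[of n "\<lambda>\<sigma>. R1 \<sigma> - R2 \<sigma>"] unfolding diff PCov_linear_combination a_def b_def d_def
    by simp
  have "w1 * a - w1 * b + w2 * b - w2 * d = 0"
    using uncorrelated unfolding diff PCov_linear_combination a_def b_def d_def
    by (simp add: algebra_simps)
  moreover have "std_stat n (\<lambda>\<sigma>. w1 * R1 \<sigma> + w2 * R2 \<sigma>)
                 = (w1 * c1 + w2 * c2) / sqrt (w1\<^sup>2 * a + 2 * w1 * w2 * b + w2\<^sup>2 * d)"
    unfolding std_stat_def var_w c1_def c2_def by (simp add: PE_add PE_cmult algebra_simps)
  moreover have "std_stat n (\<lambda>\<sigma>. R1 \<sigma> - R2 \<sigma>) = (c1 - c2) / sqrt (a - 2 * b + d)"
    unfolding std_stat_def var_diff c1_def c2_def by (simp add: PE_diff)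
  ultimately show ?thesis
    using quadratic_form_split_2x2[OF w _ _ _ c1_eq c2_eq] pos_w pos_diff
    unfolding quad var_w var_diff by (simp add: power_divide)
qed

lemma quad_stat_edge_count_complement:
  assumes G: "simple_graph_on n G" and "A \<subseteq> {1..n}" "n \<ge> 3"
    and p: "p = (real (card A) - 1) / (real n - 2)"
    and "invertible (cov_mat n (edge_count G A) (edge_count G ({1..n} - A)))"
    and "PVar n (\<lambda>\<sigma>. (1 - p) * edge_count G A \<sigma> + p * edge_count G ({1..n} - A) \<sigma>) > 0"
    and "PVar n (\<lambda>\<sigma>. edge_count G A \<sigma> - edge_count G ({1..n} - A) \<sigma>) > 0"
  shows "quad_stat n (edge_count G A) (edge_count G ({1..n} - A))
         = (std_stat n (\<lambda>\<sigma>. (1 - p) * edge_count G A \<sigma> + p * edge_count G ({1..n} - A) \<sigma>))\<^sup>2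
           + (std_stat n (\<lambda>\<sigma>. edge_count G A \<sigma> - edge_count G ({1..n} - A) \<sigma>))\<^sup>2"
  using PCov_weighted_edge_count_diff[OF G assms(2,3) p] assms(5-7)
  by (intro quad_stat_eq_std_stat_squares) simp_all

lemma quad_stat_single_change_point:
  fixes n t :: nat and G :: "nat set set" and R1 R2 :: "(nat \<Rightarrow> nat) \<Rightarrow> real" and p :: real
  defines "R1 \<equiv> edge_count G {1..t}" and "R2 \<equiv> edge_count G {t<..n}"
    and "p \<equiv> (real t - 1) / (real n - 2)"
  assumes G: "simple_graph_on n G" and t: "1 \<le> t" "t < n"
    and inv: "invertible (cov_mat n R1 R2)"
    and pos_w: "PVar n (\<lambda>\<sigma>. (1 - p) * R1 \<sigma> + p * R2 \<sigma>) > 0"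
    and pos_diff: "PVar n (\<lambda>\<sigma>. R1 \<sigma> - R2 \<sigma>) > 0"
  shows "quad_stat n R1 R2
         = (std_stat n (\<lambda>\<sigma>. (1 - p) * R1 \<sigma> + p * R2 \<sigma>))\<^sup>2 + (std_stat n (\<lambda>\<sigma>. R1 \<sigma> - R2 \<sigma>))\<^sup>2"
proof (cases "n \<ge> 3")
  case True
  have "{1..n} - {1..t} = {t<..n}" "real (card {1..t}) = real t"
    by auto
  then show ?thesis
    using quad_stat_edge_count_complement[OF G _ True refl, of "{1..t}"] t inv pos_w pos_diff
    unfolding R1_def R2_def p_def by simp
next
  case False
  \<comment> \<open>For \<open>n = 2\<close> the weight \<open>p\<close> is \<open>0 / 0 = 0\<close> and \<open>R\<^sub>w\<close> is constant, contradicting \<open>pos_w\<close>.\<close>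
  then have "n = 2" "t = 1"
    using t by auto
  then have "R1 \<sigma> = 0" "p = 0" if "\<sigma> \<in> perm_set n" for \<sigma>
    using edge_count_eq_0_if_card_le_1[OF G that] unfolding R1_def p_def by simp_all
  then have "PVar n (\<lambda>\<sigma>. (1 - p) * R1 \<sigma> + p * R2 \<sigma>) = PVar n (\<lambda>\<sigma>. 0)"
    unfolding PVar_def by (intro PCov_cong) simp_all
  then show ?thesis
    using pos_w by (simp add: PVar_def PCov_const_left)
qed

lemma quad_stat_changed_interval:
  fixes n t1 t2 :: nat and G :: "nat set set" and R1 R2 :: "(nat \<Rightarrow> nat) \<Rightarrow> real" and m :: nat
  defines "m \<equiv> t2 - t1"
    and "R1 \<equiv> edge_count G ({1..n} - {t1<..t2})" and "R2 \<equiv> edge_count G {t1<..t2}"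
  assumes G: "simple_graph_on n G" and t: "1 \<le> t1" "t1 < t2" "t2 \<le> n"
    and inv: "invertible (cov_mat n R1 R2)"
    and pos_w: "PVar n (\<lambda>\<sigma>. (real m - 1) / (real n - 2) * R1 \<sigma>
                           + (real n - real m - 1) / (real n - 2) * R2 \<sigma>) > 0"
    and pos_diff: "PVar n (\<lambda>\<sigma>. R1 \<sigma> - R2 \<sigma>) > 0"
  shows "quad_stat n R1 R2
         = (std_stat n (\<lambda>\<sigma>. (real m - 1) / (real n - 2) * R1 \<sigma>
                            + (real n - real m - 1) / (real n - 2) * R2 \<sigma>))\<^sup>2
           + (std_stat n (\<lambda>\<sigma>. R1 \<sigma> - R2 \<sigma>))\<^sup>2"
proof (cases "n \<ge> 3")
  case True
  define A where "A = {1..n} - {t1<..t2}"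
  have "{t1<..t2} \<subseteq> {1..n}"
    using t by auto
  then have "{1..n} - A = {t1<..t2}" "real (card A) - 1 = real n - real m - 1"
    using t by (auto simp: A_def m_def card_Diff_subset of_nat_diff)
  moreover have "1 - (real n - real m - 1) / (real n - 2) = (real m - 1) / (real n - 2)"
    using True by (simp add: field_simps)
  ultimately show ?thesis
    using quad_stat_edge_count_complement[OF G _ True refl, of A] inv pos_w pos_diff
    unfolding R1_def R2_def A_def by simp
next
  case False
  \<comment> \<open>For \<open>n = 2\<close> both weights are junk divisions by zero, so \<open>R\<^sub>w = 0\<close>.\<close>
  then have "n = 2"
    using t by auto
  then have "PVar n (\<lambda>\<sigma>. (real m - 1) / (real n - 2) * R1 \<sigma>
                           + (real n - real m - 1) / (real n - 2) * R2 \<sigma>) = PVar n (\<lambda>\<sigma>. 0)"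
    by simp
  then show ?thesis
    using pos_w by (simp add: PVar_def PCov_const_left)
qed

theorem lemma1:
  fixes n t t1 t2 :: nat and G :: "nat set set"
  assumes "simple_graph_on n G"
  shows
   "(let R1 = edge_count G {1..t}; R2 = edge_count G {t<..n};
         p = (real t - 1) / (real n - 2); q = 1 - p;
         Rw = (\<lambda>\<sigma>. q * R1 \<sigma> + p * R2 \<sigma>);
         Rdiff = (\<lambda>\<sigma>. R1 \<sigma> - R2 \<sigma>)
     in 1 \<le> t \<and> t < n \<and> invertible (cov_mat n R1 R2) \<and>
        PVar n Rw > 0 \<and> PVar n Rdiff > 0 \<longrightarrow>
        quad_stat n R1 R2 = (std_stat n Rw)\<^sup>2 + (std_stat n Rdiff)\<^sup>2)
  \<and>
   (let m = t2 - t1;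
         R1 = edge_count G ({1..n} - {t1<..t2}); R2 = edge_count G {t1<..t2};
         Rw = (\<lambda>\<sigma>. (real m - 1) / (real n - 2) * R1 \<sigma>
                   + (real n - real m - 1) / (real n - 2) * R2 \<sigma>);
         Rdiff = (\<lambda>\<sigma>. R1 \<sigma> - R2 \<sigma>)
     in 1 \<le> t1 \<and> t1 < t2 \<and> t2 \<le> n \<and> invertible (cov_mat n R1 R2) \<and>
        PVar n Rw > 0 \<and> PVar n Rdiff > 0 \<longrightarrow>
        quad_stat n R1 R2 = (std_stat n Rw)\<^sup>2 + (std_stat n Rdiff)\<^sup>2)"
  unfolding Let_def
  using quad_stat_single_change_point[OF assms] quad_stat_changed_interval[OF assms] by blast

end
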